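(* Let $\mathbf A$ be a finite algebra. If $\mathbf A$ has a nontrivial strongly abelian congruence, then $c^s_{\mathbf A}(n)\in 2^{\Omega(n^{1/k})}$ where $k=\lfloor\log_2|A|\rfloor$.
   Context: For a finite algebra $\mathbf A$, $c^s_{\mathbf A}(n)$ is the maximum number of surjective homomorphisms $\mathbf X\to\mathbf A$ over algebras $\mathbf X$ in the signature of $\mathbf A$ with at most $n$ elements. $\mathrm{Clo}_k(\mathbf A)$ is the set of $k$-ary term operations. A congruence $\alpha$ of $\mathbf A$ is strongly abelian if for every $k\ge1$, every $t\in\mathrm{Clo}_k(\mathbf A)$ and all $x_1,\dots,x_k,y_1,\dots,y_k,z_2,\dots,z_k\in A$ with $(x_i,y_i)\in\alpha$ for $1\le i\le k$ and $(y_i,z_i)\in\alpha$ for $2\le i\le k$, $t(x_1,\dots,x_k)=t(y_1,\dots,y_k)$ implies $t(x_1,z_2,\dots,z_k)=t(y_1,z_2,\dots,z_k)$. Nontrivial means different from the equality relation. *)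

theory Defs
  imports Complex_Main "HOL-Library.FuncSet"
begin

text \<open>Signature: arity function ar :: 's => nat.  An algebra in this signature is a pair
 (carrier, interpretation of the operation symbols), an operation taking lists of length ar f.\<close>

type_synonym ('a, 's) alg = "'a set \<times> ('s \<Rightarrow> 'a list \<Rightarrow> 'a)"

definition is_algebra :: "('s \<Rightarrow> nat) \<Rightarrow> ('a, 's) alg \<Rightarrow> bool" where
  "is_algebra ar X \<longleftrightarrow>
     (\<forall>f xs. length xs = ar f \<and> set xs \<subseteq> fst X \<longrightarrow> snd X f xs \<in> fst X)"

definition is_hom :: "('s \<Rightarrow> nat) \<Rightarrow> ('a, 's) alg \<Rightarrow> ('b, 's) alg \<Rightarrow> ('a \<Rightarrow> 'b) \<Rightarrow> bool" where
  "is_hom ar X Y h \<longleftrightarrow> h \<in> fst X \<rightarrow> fst Y \<and>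
     (\<forall>f xs. length xs = ar f \<and> set xs \<subseteq> fst X \<longrightarrow> h (snd X f xs) = snd Y f (map h xs))"

definition surj_homs :: "('s \<Rightarrow> nat) \<Rightarrow> ('a, 's) alg \<Rightarrow> ('b, 's) alg \<Rightarrow> ('a \<Rightarrow> 'b) set" where
  "surj_homs ar X Y = {h. h \<in> fst X \<rightarrow>\<^sub>E fst Y \<and> is_hom ar X Y h \<and> h ` fst X = fst Y}"

text \<open>c^s_A(n): every algebra with at most n elements is isomorphic to one whose carrier is a
 subset of nat, so we range over those.\<close>
definition cs :: "('s \<Rightarrow> nat) \<Rightarrow> ('b, 's) alg \<Rightarrow> nat \<Rightarrow> nat" where
  "cs ar A n = Sup {card (surj_homs ar X A) | X :: (nat, 's) alg.
                      is_algebra ar X \<and> finite (fst X) \<and> card (fst X) \<le> n}"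

text \<open>k-ary term operations of A, as functions on lists (meaningful on lists of length k).\<close>
inductive_set Clo :: "('s \<Rightarrow> nat) \<Rightarrow> ('a, 's) alg \<Rightarrow> nat \<Rightarrow> ('a list \<Rightarrow> 'a) set"
  for ar A k where
  proj: "i < k \<Longrightarrow> (\<lambda>xs. xs ! i) \<in> Clo ar A k"
| app: "length ts = ar f \<Longrightarrow> (\<forall>t\<in>set ts. t \<in> Clo ar A k) \<Longrightarrow>
          (\<lambda>xs. snd A f (map (\<lambda>t. t xs) ts)) \<in> Clo ar A k"

definition is_congruence :: "('s \<Rightarrow> nat) \<Rightarrow> ('a, 's) alg \<Rightarrow> ('a \<times> 'a) set \<Rightarrow> bool" where
  "is_congruence ar A \<alpha> \<longleftrightarrow> equiv (fst A) \<alpha> \<and>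
     (\<forall>f xs ys. length xs = ar f \<and> length ys = ar f \<and> set xs \<subseteq> fst A \<and> set ys \<subseteq> fst A \<and>
        (\<forall>i < ar f. (xs ! i, ys ! i) \<in> \<alpha>) \<longrightarrow> (snd A f xs, snd A f ys) \<in> \<alpha>)"

definition strongly_abelian :: "('s \<Rightarrow> nat) \<Rightarrow> ('a, 's) alg \<Rightarrow> ('a \<times> 'a) set \<Rightarrow> bool" where
  "strongly_abelian ar A \<alpha> \<longleftrightarrow>
     (\<forall>k \<ge> 1. \<forall>t \<in> Clo ar A k. \<forall>xs ys zs.
        length xs = k \<and> length ys = k \<and> length zs = k \<and>
        set xs \<subseteq> fst A \<and> set ys \<subseteq> fst A \<and> set zs \<subseteq> fst A \<and>
        (\<forall>i < k. (xs ! i, ys ! i) \<in> \<alpha>) \<and>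
        (\<forall>i. 1 \<le> i \<and> i < k \<longrightarrow> (ys ! i, zs ! i) \<in> \<alpha>) \<and>
        t xs = t ys \<longrightarrow>
        t (xs ! 0 # tl zs) = t (ys ! 0 # tl zs))"

end

theory Submission
  imports Defs
begin

text \<open>Fix \<alpha>-related elements \<open>a \<noteq> b\<close> and let \<open>Y\<^sub>m\<close> be the algebra of polynomial functions of
  \<open>A\<close> restricted to the cube \<open>{a, b}\<^sup>m\<close>. Evaluation at the \<open>2\<^sup>m\<close> points of the cube gives
  distinct surjective homomorphisms \<open>Y\<^sub>m \<rightarrow> A\<close>. Strong abelianness lets one move a single
  coordinate of a polynomial independently of the others, so a polynomial with essential
  coordinates \<open>E\<close> is injective on \<open>{a, b}\<^sup>E\<close> (other coordinates fixed); hence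
  \<open>|E| \<le> k = \<lfloor>log\<^sub>2 |A|\<rfloor>\<close>, and the polynomial is determined by \<open>E\<close> and this restriction.
  Thus \<open>|Y\<^sub>m| \<le> (m + 1)\<^sup>k |A|\<^bsup>2\<^sup>k\<^esup>\<close>, so \<open>c\<^sup>s\<^sub>A(n) \<ge> 2\<^sup>m\<close> for \<open>n\<close> of order \<open>m\<^sup>k\<close>.\<close>

lemma finite_surj_homs:
  assumes "finite (fst X)" and "finite (fst A)"
  shows "finite (surj_homs ar X A)"
  by (rule finite_subset[of _ "fst X \<rightarrow>\<^sub>E fst A"]) (auto simp: surj_homs_def finite_PiE assms)

lemma bdd_above_card_surj_homs:
  assumes "finite (fst A)"
  shows "bdd_above {card (surj_homs ar X A) | X :: (nat, 's) alg.
                      is_algebra ar X \<and> finite (fst X) \<and> card (fst X) \<le> n}"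
proof (rule bdd_aboveI[where M = "Suc (card (fst A)) ^ n"], clarify)
  fix X :: "(nat, 's) alg"
  assume X: "finite (fst X)" "card (fst X) \<le> n"
  have "card (surj_homs ar X A) \<le> card (fst X \<rightarrow>\<^sub>E fst A)"
    by (rule card_mono) (auto simp: surj_homs_def finite_PiE assms X)
  also have "\<dots> = card (fst A) ^ card (fst X)" using X by (simp add: card_PiE)
  also have "\<dots> \<le> Suc (card (fst A)) ^ card (fst X)" by (simp add: power_mono)
  also have "\<dots> \<le> Suc (card (fst A)) ^ n" using X by (simp add: power_increasing)
  finally show "card (surj_homs ar X A) \<le> Suc (card (fst A)) ^ n" .
qed

definition relabel :: "('b \<Rightarrow> nat) \<Rightarrow> ('b, 's) alg \<Rightarrow> (nat, 's) alg" where
  "relabel \<phi> Y = (\<phi> ` fst Y, \<lambda>f xs. \<phi> (snd Y f (map (inv_into (fst Y) \<phi>) xs)))"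

lemma is_algebra_relabel:
  assumes "is_algebra ar Y"
  shows "is_algebra ar (relabel \<phi> Y)"
  unfolding is_algebra_def relabel_def
proof clarsimp
  fix f xs assume "length xs = ar f" and "set xs \<subseteq> \<phi> ` fst Y"
  moreover have "set (map (inv_into (fst Y) \<phi>) xs) \<subseteq> fst Y"
    using \<open>set xs \<subseteq> \<phi> ` fst Y\<close> by (auto intro: inv_into_into)
  ultimately have "snd Y f (map (inv_into (fst Y) \<phi>) xs) \<in> fst Y"
    using assms unfolding is_algebra_def by simp
  then show "\<phi> (snd Y f (map (inv_into (fst Y) \<phi>) xs)) \<in> \<phi> ` fst Y" by blast
qed

lemma surj_hom_relabel:
  assumes Y: "is_algebra ar Y" and \<phi>: "inj_on \<phi> (fst Y)" and h: "h \<in> surj_homs ar Y A"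
  shows "restrict (h \<circ> inv_into (fst Y) \<phi>) (\<phi> ` fst Y) \<in> surj_homs ar (relabel \<phi> Y) A"
proof -
  let ?\<psi> = "inv_into (fst Y) \<phi>" and ?h' = "restrict (h \<circ> inv_into (fst Y) \<phi>) (\<phi> ` fst Y)"
  have h_fun: "h \<in> fst Y \<rightarrow> fst A" and h_hom: "is_hom ar Y A h" and h_onto: "h ` fst Y = fst A"
    using h by (auto simp: surj_homs_def)
  have "?h' \<in> fst (relabel \<phi> Y) \<rightarrow>\<^sub>E fst A"
    using h_fun \<phi> by (auto simp: relabel_def)
  moreover have "is_hom ar (relabel \<phi> Y) A ?h'"
    unfolding is_hom_def
  proof (intro conjI allI impI)
    show "?h' \<in> fst (relabel \<phi> Y) \<rightarrow> fst A" using \<open>?h' \<in> _ \<rightarrow>\<^sub>E _\<close> by auto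
    fix f xs assume xs: "length xs = ar f \<and> set xs \<subseteq> fst (relabel \<phi> Y)"
    then have \<psi>xs: "length (map ?\<psi> xs) = ar f" "set (map ?\<psi> xs) \<subseteq> fst Y"
      by (auto simp: relabel_def inv_into_into)
    then have "snd Y f (map ?\<psi> xs) \<in> fst Y" using Y unfolding is_algebra_def by blast
    then have "?h' (snd (relabel \<phi> Y) f xs) = h (snd Y f (map ?\<psi> xs))"
      using \<phi> by (simp add: relabel_def)
    also have "\<dots> = snd A f (map h (map ?\<psi> xs))"
      using h_hom \<psi>xs unfolding is_hom_def by blast
    also have "map h (map ?\<psi> xs) = map ?h' xs"
      using xs by (auto simp: relabel_def)
    finally show "?h' (snd (relabel \<phi> Y) f xs) = snd A f (map ?h' xs)" .
  qed
  moreover have "?h' ` fst (relabel \<phi> Y) = fst A"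
    using \<phi> h_onto by (auto simp: relabel_def image_image)
  ultimately show ?thesis by (simp add: surj_homs_def)
qed

lemma card_surj_homs_le_relabel:
  assumes "is_algebra ar Y" and "inj_on \<phi> (fst Y)" and "finite (fst Y)" and "finite (fst A)"
  shows "card (surj_homs ar Y A) \<le> card (surj_homs ar (relabel \<phi> Y) A)"
proof (rule card_inj_on_le)
  let ?H = "\<lambda>h. restrict (h \<circ> inv_into (fst Y) \<phi>) (\<phi> ` fst Y)"
  show "?H ` surj_homs ar Y A \<subseteq> surj_homs ar (relabel \<phi> Y) A"
    using surj_hom_relabel[OF assms(1,2)] by blast
  show "inj_on ?H (surj_homs ar Y A)"
  proof (rule inj_onI)
    fix h1 h2 assume h: "h1 \<in> surj_homs ar Y A" "h2 \<in> surj_homs ar Y A" and eq: "?H h1 = ?H h2"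
    show "h1 = h2"
    proof (rule extensionalityI[of _ "fst Y"])
      show "h1 \<in> extensional (fst Y)" "h2 \<in> extensional (fst Y)"
        using h by (auto simp: surj_homs_def PiE_def)
      fix y assume "y \<in> fst Y"
      then show "h1 y = h2 y" using fun_cong[OF eq, of "\<phi> y"] assms(2) by simp
    qed
  qed
  show "finite (surj_homs ar (relabel \<phi> Y) A)"
    by (rule finite_surj_homs) (use assms in \<open>simp_all add: relabel_def\<close>)
qed

lemma card_surj_homs_le_cs:
  fixes ar :: "'s \<Rightarrow> nat" and Y :: "('b, 's) alg" and A :: "('a, 's) alg"
  assumes "is_algebra ar Y" and "finite (fst Y)" and "card (fst Y) \<le> n" and "finite (fst A)"
  shows "card (surj_homs ar Y A) \<le> cs ar A n"
proof -
  obtain \<phi> where "bij_betw \<phi> (fst Y) {0..<card (fst Y)}"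
    using ex_bij_betw_finite_nat[OF assms(2)] by blast
  then have \<phi>: "inj_on \<phi> (fst Y)" by (simp add: bij_betw_def)
  have "card (surj_homs ar Y A) \<le> card (surj_homs ar (relabel \<phi> Y) A)"
    using card_surj_homs_le_relabel[OF assms(1) \<phi> assms(2,4)] .
  also have "\<dots> \<le> cs ar A n"
    unfolding cs_def
  proof (rule cSup_upper[OF _ bdd_above_card_surj_homs[OF assms(4)]])
    have "finite (fst (relabel \<phi> Y))" "card (fst (relabel \<phi> Y)) \<le> n"
      using assms(2,3) \<phi> by (simp_all add: relabel_def card_image)
    then show "card (surj_homs ar (relabel \<phi> Y) A) \<in> {card (surj_homs ar X A) | X :: (nat, 's) alg.
                 is_algebra ar X \<and> finite (fst X) \<and> card (fst X) \<le> n}"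
      using is_algebra_relabel[OF assms(1)] by blast
  qed
  finally show ?thesis .
qed

lemma Clo_closed:
  assumes "t \<in> Clo ar A k" and "is_algebra ar A" and "length xs = k" and "set xs \<subseteq> fst A"
  shows "t xs \<in> fst A"
  using assms(1)
proof induction
  case (app ts f)
  then have "set (map (\<lambda>t. t xs) ts) \<subseteq> fst A" by auto
  then show ?case using assms(2) app(1) unfolding is_algebra_def by simp
qed (use assms in auto)

lemma Clo_compose:
  assumes "t \<in> Clo ar A k" and "\<forall>s\<in>set ss. s \<in> Clo ar A k'" and "length ss = k"
  shows "(\<lambda>ws. t (map (\<lambda>s. s ws) ss)) \<in> Clo ar A k'"
  using assms
proof induction
  case (proj i)
  then have "(\<lambda>ws. map (\<lambda>s. s ws) ss ! i) = ss ! i" by auto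
  then show ?case using proj by auto
next
  case (app ts f)
  have "(\<lambda>ws. snd A f (map (\<lambda>t. t ws) (map (\<lambda>t ws. t (map (\<lambda>s. s ws) ss)) ts))) \<in> Clo ar A k'"
    by (rule Clo.app) (use app in auto)
  then show ?case by (simp add: o_def)
qed

lemma Clo_move_to_front:
  assumes "t \<in> Clo ar A k" and "i < k"
  obtains t' where "t' \<in> Clo ar A (Suc k)"
    and "\<And>x ws. length ws = k \<Longrightarrow> t' (x # ws) = t (ws[i := x])"
proof
  let ?ss = "map (\<lambda>l ws. ws ! (if l = i then 0 else Suc l)) [0..<k]"
  show "(\<lambda>ws. t (map (\<lambda>s. s ws) ?ss)) \<in> Clo ar A (Suc k)"
    by (rule Clo_compose[OF assms(1)]) (auto intro: Clo.proj)
  fix x and ws :: "'a list" assume "length ws = k"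
  then have "map (\<lambda>s. s (x # ws)) ?ss = ws[i := x]"
    by (intro nth_equalityI) (auto simp: nth_list_update)
  then show "t (map (\<lambda>s. s (x # ws)) ?ss) = t (ws[i := x])" by simp
qed

lemma strongly_abelian_update:
  assumes sab: "strongly_abelian ar A \<alpha>" and t: "t \<in> Clo ar A k" and i: "i < k"
    and len: "length xs = k" "length ys = k" "length zs = k"
    and set: "set xs \<subseteq> fst A" "set ys \<subseteq> fst A" "set zs \<subseteq> fst A"
    and xy: "\<forall>j<k. (xs ! j, ys ! j) \<in> \<alpha>" and yz: "\<forall>j<k. (ys ! j, zs ! j) \<in> \<alpha>"
    and eq: "t xs = t ys"
  shows "t (zs[i := xs ! i]) = t (zs[i := ys ! i])"
proof -
  obtain t' where t': "t' \<in> Clo ar A (Suc k)"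
    and t'_eq: "\<And>x ws. length ws = k \<Longrightarrow> t' (x # ws) = t (ws[i := x])"
    using Clo_move_to_front[OF t i] by blast
  let ?xs = "xs ! i # xs" and ?ys = "ys ! i # ys" and ?zs = "zs ! i # zs"
  have "t' ?xs = t' ?ys" using eq len by (simp add: t'_eq)
  moreover have "\<forall>j<Suc k. (?xs ! j, ?ys ! j) \<in> \<alpha>"
    using xy i by (auto simp: less_Suc_eq_0_disj)
  moreover have "\<forall>j. 1 \<le> j \<and> j < Suc k \<longrightarrow> (?ys ! j, ?zs ! j) \<in> \<alpha>"
    using yz by (auto simp: less_Suc_eq_0_disj)
  moreover have "set ?xs \<subseteq> fst A" "set ?ys \<subseteq> fst A" "set ?zs \<subseteq> fst A"
    using set len i by auto
  ultimately have "t' (?xs ! 0 # tl ?zs) = t' (?ys ! 0 # tl ?zs)"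
    using sab[unfolded strongly_abelian_def, rule_format, OF _ t', of ?xs ?ys ?zs] len by simp
  then show ?thesis using len by (simp add: t'_eq)
qed

lemma card_subsets_le: "card {E. E \<subseteq> {..<m} \<and> card E \<le> k} \<le> Suc m ^ k"
proof (induction k)
  case 0
  have "E = {}" if "E \<subseteq> {..<m}" and "card E = 0" for E :: "nat set"
    using that by (metis card_0_eq finite_lessThan finite_subset)
  then have "{E. E \<subseteq> {..<m} \<and> card E \<le> 0} = {{}}" by auto
  then show ?case by simp
next
  case (Suc k)
  let ?S = "\<lambda>k. {E. E \<subseteq> {..<m} \<and> card E \<le> k}"
  have "?S (Suc k) \<subseteq> insert {} ((\<lambda>(x, E). insert x E) ` ({..<m} \<times> ?S k))"
  proof
    fix E assume E: "E \<in> ?S (Suc k)"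
    show "E \<in> insert {} ((\<lambda>(x, E). insert x E) ` ({..<m} \<times> ?S k))"
    proof (cases "E = {}")
      case False
      then obtain x where x: "x \<in> E" by blast
      have "finite E" using E finite_subset[of E "{..<m}"] by simp
      then have "card (E - {x}) \<le> k" using E x by auto
      then have "(x, E - {x}) \<in> {..<m} \<times> ?S k" using E x by auto
      then have "(\<lambda>(x, E). insert x E) (x, E - {x}) \<in> (\<lambda>(x, E). insert x E) ` ({..<m} \<times> ?S k)"
        by (rule imageI)
      then show ?thesis using x by (simp add: insert_absorb)
    qed simp
  qed
  moreover have "finite (?S k)" by (rule finite_subset[of _ "Pow {..<m}"]) auto
  ultimately have "card (?S (Suc k)) \<le> card (insert {} ((\<lambda>(x, E). insert x E) ` ({..<m} \<times> ?S k)))"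
    by (intro card_mono) auto
  also have "\<dots> \<le> Suc (card ((\<lambda>(x, E). insert x E) ` ({..<m} \<times> ?S k)))"
    using \<open>finite (?S k)\<close> by (simp add: card_insert_if)
  also have "\<dots> \<le> Suc (card ({..<m} \<times> ?S k))"
    using card_image_le[of "{..<m} \<times> ?S k" "\<lambda>(x, E). insert x E"] \<open>finite (?S k)\<close> by simp
  also have "\<dots> \<le> Suc (m * Suc m ^ k)" using Suc.IH by (simp add: card_cartesian_product)
  also have "\<dots> \<le> Suc m ^ Suc k" by simp
  finally show ?case .
qed

lemma exists_index_below_root:
  fixes K D n :: nat
  assumes K: "K \<ge> 1" and D: "D \<ge> 1" and n: "(4 * D) ^ K \<le> n"
  shows "\<exists>m. Suc m ^ K * D \<le> n \<and> real n powr (1 / real K) / (2 * real D) \<le> real m"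
proof -
  define r where "r = real n powr (1 / real K)"
  have rK: "r ^ K = real n" using K by (simp add: r_def flip: root_powr_inverse)
  have "(4 * real D) ^ K \<le> r ^ K"
    unfolding rK using n by (metis of_nat_le_iff of_nat_mult of_nat_numeral of_nat_power)
  then have r4: "4 * real D \<le> r"
    by (rule power_mono_iff[THEN iffD1, rotated 3]) (use K in \<open>auto simp: r_def\<close>)
  define s where "s = r / real D"
  have s4: "4 \<le> s" using r4 D by (simp add: s_def field_simps)
  define m where "m = nat \<lfloor>s\<rfloor> - 1"
  have m_eq: "real (Suc m) = of_int \<lfloor>s\<rfloor>" using s4 by (simp add: m_def of_nat_diff)
  have "real (Suc m ^ K * D) \<le> real (Suc m) ^ K * real D ^ K"
    using D K by (simp add: self_le_power)
  also have "\<dots> = (real (Suc m) * real D) ^ K" by (simp add: power_mult_distrib)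
  also have "\<dots> \<le> r ^ K"
  proof (rule power_mono)
    have "real (Suc m) \<le> s" using m_eq by simp
    then show "real (Suc m) * real D \<le> r" using D by (simp add: s_def pos_le_divide_eq)
  qed simp
  finally have "Suc m ^ K * D \<le> n" unfolding rK by (simp only: of_nat_le_iff)
  moreover have "r / (2 * real D) \<le> real m"
  proof -
    have "s < real m + 2" using m_eq real_of_int_floor_add_one_gt[of s] by linarith
    then have "s / 2 \<le> real m" using s4 by linarith
    then show ?thesis by (simp add: s_def)
  qed
  ultimately show ?thesis by (auto simp: r_def)
qed

lemma eventually_exp_root_le:
  fixes F :: "nat \<Rightarrow> nat" and K D :: nat
  assumes K: "K \<ge> 1" and D: "D \<ge> 1" and F: "\<And>m n. Suc m ^ K * D \<le> n \<Longrightarrow> 2 ^ m \<le> F n"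
  shows "\<exists>C > 0. \<forall>\<^sub>F n in sequentially. real (F n) \<ge> 2 powr (C * real n powr (1 / real K))"
proof (intro exI conjI)
  show "1 / (2 * real D) > 0" using D by simp
  show "\<forall>\<^sub>F n in sequentially. real (F n) \<ge> 2 powr (1 / (2 * real D) * real n powr (1 / real K))"
  proof (rule eventually_sequentiallyI)
    fix n assume "(4 * D) ^ K \<le> n"
    then obtain m where m: "Suc m ^ K * D \<le> n" "real n powr (1 / real K) / (2 * real D) \<le> real m"
      using exists_index_below_root K D by blast
    have "2 powr (1 / (2 * real D) * real n powr (1 / real K)) \<le> 2 powr real m" using m(2) by simp
    also have "\<dots> = real (2 ^ m)" by (simp add: powr_realpow)
    also have "\<dots> \<le> real (F n)" using F[OF m(1)] by linarith
    finally show "real (F n) \<ge> 2 powr (1 / (2 * real D) * real n powr (1 / real K))" .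
  qed
qed

locale strongly_abelian_witness =
  fixes ar :: "'s \<Rightarrow> nat" and A :: "('a, 's) alg" and \<alpha> :: "('a \<times> 'a) set"
    and a b :: 'a and elems :: "'a list"
  assumes alg: "is_algebra ar A" and fin: "finite (fst A)"
    and equiv: "equiv (fst A) \<alpha>" and sab: "strongly_abelian ar A \<alpha>"
    and ab: "(a, b) \<in> \<alpha>" and a_neq_b: "a \<noteq> b" and elems: "set elems = fst A"
begin

definition cube :: "nat \<Rightarrow> (nat \<Rightarrow> 'a) set" where
  "cube m = {..<m} \<rightarrow>\<^sub>E {a, b}"

definition inputs :: "nat \<Rightarrow> (nat \<Rightarrow> 'a) \<Rightarrow> 'a list" where
  "inputs m \<sigma> = map \<sigma> [0..<m] @ elems"

text \<open>The trailing arguments supply every element of \<open>A\<close> as a constant, so \<open>polys m\<close> consists of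
  the polynomial functions of \<open>A\<close> restricted to the cube.\<close>

definition polys :: "nat \<Rightarrow> ((nat \<Rightarrow> 'a) \<Rightarrow> 'a) set" where
  "polys m = {restrict (\<lambda>\<sigma>. t (inputs m \<sigma>)) (cube m) | t. t \<in> Clo ar A (m + length elems)}"

definition poly_alg :: "nat \<Rightarrow> ((nat \<Rightarrow> 'a) \<Rightarrow> 'a, 's) alg" where
  "poly_alg m = (polys m, \<lambda>f qs. restrict (\<lambda>\<sigma>. snd A f (map (\<lambda>q. q \<sigma>) qs)) (cube m))"

definition eval_at :: "nat \<Rightarrow> (nat \<Rightarrow> 'a) \<Rightarrow> ((nat \<Rightarrow> 'a) \<Rightarrow> 'a) \<Rightarrow> 'a" where
  "eval_at m \<sigma> = restrict (\<lambda>q. q \<sigma>) (polys m)"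

lemma a_in_A: "a \<in> fst A" and b_in_A: "b \<in> fst A"
  using equiv_type[OF equiv] ab by auto

lemma card_A_pos: "card (fst A) > 0"
  using a_in_A fin card_gt_0_iff by blast

lemma refl_\<alpha>: "x \<in> fst A \<Longrightarrow> (x, x) \<in> \<alpha>"
  using equiv unfolding equiv_def by (blast intro: refl_onD)

lemma ab_rel: "x \<in> {a, b} \<Longrightarrow> y \<in> {a, b} \<Longrightarrow> (x, y) \<in> \<alpha>"
  using ab equiv refl_\<alpha>[OF a_in_A] refl_\<alpha>[OF b_in_A] unfolding equiv_def by (blast dest: symD)

lemma cube_apply: "\<sigma> \<in> cube m \<Longrightarrow> i < m \<Longrightarrow> \<sigma> i \<in> {a, b}"
  by (auto simp: cube_def)

lemma cube_update: "\<sigma> \<in> cube m \<Longrightarrow> i < m \<Longrightarrow> x \<in> {a, b} \<Longrightarrow> \<sigma>(i := x) \<in> cube m"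
  using PiE_fun_upd[of x "\<lambda>_. {a, b}" i \<sigma> "{..<m}"] by (simp add: cube_def insert_absorb)

lemma card_cube: "card (cube m) = 2 ^ m"
  using a_neq_b by (simp add: cube_def card_PiE numeral_2_eq_2)

lemma length_inputs [simp]: "length (inputs m \<sigma>) = m + length elems"
  by (simp add: inputs_def)

lemma nth_inputs:
  "j < m + length elems \<Longrightarrow> inputs m \<sigma> ! j = (if j < m then \<sigma> j else elems ! (j - m))"
  by (simp add: inputs_def nth_append)

lemma inputs_update: "i < m \<Longrightarrow> (inputs m \<sigma>)[i := x] = inputs m (\<sigma>(i := x))"
  by (rule nth_equalityI) (auto simp: nth_list_update nth_inputs)

lemma set_inputs: "\<sigma> \<in> cube m \<Longrightarrow> set (inputs m \<sigma>) \<subseteq> fst A"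
  using a_in_A b_in_A elems by (auto simp: inputs_def cube_def)

lemma inputs_rel:
  assumes "\<sigma> \<in> cube m" and "\<tau> \<in> cube m" and "j < m + length elems"
  shows "(inputs m \<sigma> ! j, inputs m \<tau> ! j) \<in> \<alpha>"
proof (cases "j < m")
  case True
  then have "\<sigma> j \<in> {a, b}" and "\<tau> j \<in> {a, b}" using assms cube_apply by blast+
  then show ?thesis using True assms(3) by (simp add: nth_inputs ab_rel)
next
  case False
  then have "elems ! (j - m) \<in> fst A" using assms(3) elems nth_mem by fastforce
  then show ?thesis using False assms(3) by (simp add: nth_inputs refl_\<alpha>)
qed

lemma polys_extensional: "q \<in> polys m \<Longrightarrow> q \<in> extensional (cube m)"
  by (auto simp: polys_def)

lemma polys_closed: "q \<in> polys m \<Longrightarrow> \<sigma> \<in> cube m \<Longrightarrow> q \<sigma> \<in> fst A"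
  using Clo_closed[OF _ alg] set_inputs by (auto simp: polys_def)

lemma coordinate_in_polys:
  "j < m + length elems \<Longrightarrow> restrict (\<lambda>\<sigma>. inputs m \<sigma> ! j) (cube m) \<in> polys m"
  unfolding polys_def by (intro CollectI exI[of _ "\<lambda>xs. xs ! j"]) (auto intro: Clo.proj)

lemma is_algebra_poly_alg: "is_algebra ar (poly_alg m)"
  unfolding is_algebra_def poly_alg_def
proof clarsimp
  fix f qs assume len: "length qs = ar f" and qs: "set qs \<subseteq> polys m"
  have "\<forall>q\<in>set qs. \<exists>t. t \<in> Clo ar A (m + length elems) \<and>
      q = restrict (\<lambda>\<sigma>. t (inputs m \<sigma>)) (cube m)"
    using qs unfolding polys_def by blast
  then obtain T where T: "\<And>q. q \<in> set qs \<Longrightarrow>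
      T q \<in> Clo ar A (m + length elems) \<and> q = restrict (\<lambda>\<sigma>. T q (inputs m \<sigma>)) (cube m)"
    by metis
  have "(\<lambda>xs. snd A f (map (\<lambda>t. t xs) (map T qs))) \<in> Clo ar A (m + length elems)"
    by (rule Clo.app) (use len T in auto)
  moreover have "restrict (\<lambda>\<sigma>. snd A f (map (\<lambda>q. q \<sigma>) qs)) (cube m)
      = restrict (\<lambda>\<sigma>. snd A f (map (\<lambda>t. t (inputs m \<sigma>)) (map T qs))) (cube m)"
  proof (rule restrict_ext)
    fix \<sigma> assume "\<sigma> \<in> cube m"
    then have "q \<sigma> = T q (inputs m \<sigma>)" if "q \<in> set qs" for q
      using T[OF that] by (metis restrict_apply')
    then have "map (\<lambda>q. q \<sigma>) qs = map (\<lambda>t. t (inputs m \<sigma>)) (map T qs)"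
      by simp
    then show "snd A f (map (\<lambda>q. q \<sigma>) qs) = snd A f (map (\<lambda>t. t (inputs m \<sigma>)) (map T qs))"
      by (rule arg_cong)
  qed
  ultimately show "restrict (\<lambda>\<sigma>. snd A f (map (\<lambda>q. q \<sigma>) qs)) (cube m) \<in> polys m"
    unfolding polys_def by (intro CollectI exI[of _ "\<lambda>xs. snd A f (map (\<lambda>t. t xs) (map T qs))"]) simp
qed

lemma eval_at_surj_hom:
  assumes \<sigma>: "\<sigma> \<in> cube m"
  shows "eval_at m \<sigma> \<in> surj_homs ar (poly_alg m) A"
proof -
  have into: "eval_at m \<sigma> \<in> polys m \<rightarrow>\<^sub>E fst A"
    using polys_closed \<sigma> by (auto simp: eval_at_def)
  have "is_hom ar (poly_alg m) A (eval_at m \<sigma>)"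
    unfolding is_hom_def
  proof (intro conjI allI impI)
    show "eval_at m \<sigma> \<in> fst (poly_alg m) \<rightarrow> fst A" using into by (auto simp: poly_alg_def)
    fix f qs assume qs: "length qs = ar f \<and> set qs \<subseteq> fst (poly_alg m)"
    then have "snd (poly_alg m) f qs \<in> polys m"
      using is_algebra_poly_alg unfolding is_algebra_def by (auto simp: poly_alg_def)
    then show "eval_at m \<sigma> (snd (poly_alg m) f qs) = snd A f (map (eval_at m \<sigma>) qs)"
      using \<sigma> qs by (auto simp: eval_at_def poly_alg_def intro!: arg_cong[where f = "snd A f"])
  qed
  moreover have "fst A \<subseteq> eval_at m \<sigma> ` polys m"
  proof
    fix c assume "c \<in> fst A"
    then obtain j where j: "j < length elems" "c = elems ! j" using elems by (metis in_set_conv_nth)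
    then have "restrict (\<lambda>\<sigma>. inputs m \<sigma> ! (m + j)) (cube m) \<in> polys m"
      by (intro coordinate_in_polys) simp
    moreover have "eval_at m \<sigma> (restrict (\<lambda>\<sigma>. inputs m \<sigma> ! (m + j)) (cube m)) = c"
      using calculation \<sigma> j by (simp add: eval_at_def nth_inputs)
    ultimately show "c \<in> eval_at m \<sigma> ` polys m" by force
  qed
  ultimately show ?thesis
    using into by (auto simp: surj_homs_def poly_alg_def)
qed

lemma inj_on_eval_at: "inj_on (eval_at m) (cube m)"
proof (rule inj_onI)
  fix \<sigma> \<tau> assume \<sigma>: "\<sigma> \<in> cube m" and \<tau>: "\<tau> \<in> cube m" and eq: "eval_at m \<sigma> = eval_at m \<tau>"
  show "\<sigma> = \<tau>"
  proof (rule PiE_ext[OF \<sigma>[unfolded cube_def] \<tau>[unfolded cube_def]])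
    fix i assume "i \<in> {..<m}"
    then have "restrict (\<lambda>\<sigma>. inputs m \<sigma> ! i) (cube m) \<in> polys m"
      by (intro coordinate_in_polys) simp
    then show "\<sigma> i = \<tau> i"
      using fun_cong[OF eq, of "restrict (\<lambda>\<sigma>. inputs m \<sigma> ! i) (cube m)"] \<sigma> \<tau> \<open>i \<in> {..<m}\<close>
      by (simp add: eval_at_def nth_inputs)
  qed
qed

lemma card_surj_homs_poly_alg:
  assumes "finite (polys m)"
  shows "2 ^ m \<le> card (surj_homs ar (poly_alg m) A)"
proof -
  have "finite (surj_homs ar (poly_alg m) A)"
    by (rule finite_surj_homs) (simp_all add: poly_alg_def assms fin)
  then have "card (cube m) \<le> card (surj_homs ar (poly_alg m) A)"
    using eval_at_surj_hom by (intro card_inj_on_le[OF inj_on_eval_at]) auto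
  then show ?thesis by (simp add: card_cube)
qed

lemma polys_update:
  assumes q: "q \<in> polys m" and i: "i < m" and \<sigma>: "\<sigma> \<in> cube m"
    and \<sigma>1: "\<sigma>1 \<in> cube m" and \<sigma>2: "\<sigma>2 \<in> cube m" and eq: "q \<sigma>1 = q \<sigma>2"
  shows "q (\<sigma>(i := \<sigma>1 i)) = q (\<sigma>(i := \<sigma>2 i))"
proof -
  obtain t where t: "t \<in> Clo ar A (m + length elems)"
    and q_eq: "q = restrict (\<lambda>\<sigma>. t (inputs m \<sigma>)) (cube m)"
    using q unfolding polys_def by blast
  have "t ((inputs m \<sigma>)[i := inputs m \<sigma>1 ! i]) = t ((inputs m \<sigma>)[i := inputs m \<sigma>2 ! i])"
  proof (rule strongly_abelian_update[OF sab t])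
    show "t (inputs m \<sigma>1) = t (inputs m \<sigma>2)" using eq \<sigma>1 \<sigma>2 q_eq by simp
  qed (use i \<sigma> \<sigma>1 \<sigma>2 set_inputs inputs_rel in auto)
  moreover have "\<sigma>(i := \<sigma>1 i) \<in> cube m" "\<sigma>(i := \<sigma>2 i) \<in> cube m"
    using cube_update cube_apply \<sigma> \<sigma>1 \<sigma>2 i by blast+
  ultimately show ?thesis using i q_eq by (simp add: nth_inputs inputs_update)
qed

definition essential :: "nat \<Rightarrow> ((nat \<Rightarrow> 'a) \<Rightarrow> 'a) \<Rightarrow> nat set" where
  "essential m q = {i. i < m \<and> (\<exists>\<sigma>\<in>cube m. q (\<sigma>(i := a)) \<noteq> q (\<sigma>(i := b)))}"

lemma essential_subset: "essential m q \<subseteq> {..<m}"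
  by (auto simp: essential_def)

lemma update_inessential:
  assumes "\<sigma> \<in> cube m" and "i < m" and "i \<notin> essential m q" and "x \<in> {a, b}" and "y \<in> {a, b}"
  shows "q (\<sigma>(i := x)) = q (\<sigma>(i := y))"
  using assms by (auto simp: essential_def)

lemma eq_if_agree_on_essential:
  assumes "\<sigma> \<in> cube m" and "\<tau> \<in> cube m" and "\<forall>i\<in>essential m q. \<sigma> i = \<tau> i"
  shows "q \<sigma> = q \<tau>"
  using assms
proof (induction "card {i. i < m \<and> \<sigma> i \<noteq> \<tau> i}" arbitrary: \<sigma>)
  case 0
  then have "\<sigma> i = \<tau> i" if "i \<in> {..<m}" for i using that by auto
  then have "\<sigma> = \<tau>" using "0.prems"(1,2) unfolding cube_def by (rule PiE_ext[rotated 2])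
  then show ?case by simp
next
  case (Suc d)
  then obtain i where i: "i < m" "\<sigma> i \<noteq> \<tau> i"
    by (metis (mono_tags, lifting) card.empty empty_Collect_eq nat.distinct(1))
  let ?\<sigma>' = "\<sigma>(i := \<tau> i)"
  have \<sigma>i: "\<sigma> i \<in> {a, b}" and \<tau>i: "\<tau> i \<in> {a, b}" using Suc.prems cube_apply i by blast+
  have "{j. j < m \<and> ?\<sigma>' j \<noteq> \<tau> j} = {j. j < m \<and> \<sigma> j \<noteq> \<tau> j} - {i}" by auto
  then have "d = card {j. j < m \<and> ?\<sigma>' j \<noteq> \<tau> j}" using Suc.hyps(2) i by simp
  then have "q ?\<sigma>' = q \<tau>" using Suc cube_update[OF _ i(1) \<tau>i] by auto
  moreover have "q \<sigma> = q ?\<sigma>'"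
    using update_inessential[OF Suc.prems(1) i(1) _ \<sigma>i \<tau>i] Suc.prems(3) i by fastforce
  ultimately show ?case by simp
qed

definition fill :: "nat \<Rightarrow> nat set \<Rightarrow> (nat \<Rightarrow> 'a) \<Rightarrow> nat \<Rightarrow> 'a" where
  "fill m E \<tau> i = (if i \<in> E then \<tau> i else if i < m then a else undefined)"

lemma fill_in_cube: "E \<subseteq> {..<m} \<Longrightarrow> \<tau> \<in> E \<rightarrow>\<^sub>E {a, b} \<Longrightarrow> fill m E \<tau> \<in> cube m"
  by (auto simp: cube_def fill_def PiE_def Pi_def extensional_def)

lemma inj_on_fill_essential:
  assumes q: "q \<in> polys m"
  shows "inj_on (\<lambda>\<tau>. q (fill m (essential m q) \<tau>)) (essential m q \<rightarrow>\<^sub>E {a, b})"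
proof (rule inj_onI, rule ccontr)
  let ?E = "essential m q"
  fix \<tau>1 \<tau>2 assume \<tau>1: "\<tau>1 \<in> ?E \<rightarrow>\<^sub>E {a, b}" and \<tau>2: "\<tau>2 \<in> ?E \<rightarrow>\<^sub>E {a, b}"
    and eq: "q (fill m ?E \<tau>1) = q (fill m ?E \<tau>2)" and ne: "\<tau>1 \<noteq> \<tau>2"
  obtain i where i: "i \<in> ?E" "\<tau>1 i \<noteq> \<tau>2 i"
    using ne \<tau>1 \<tau>2 by (metis PiE_ext)
  then obtain \<sigma> where \<sigma>: "\<sigma> \<in> cube m" and i_m: "i < m" and neq: "q (\<sigma>(i := a)) \<noteq> q (\<sigma>(i := b))"
    unfolding essential_def by blast
  \<comment> \<open>moving coordinate \<open>i\<close> transfers the equality at the two fillings to the witness \<open>\<sigma>\<close>\<close>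
  have "q (\<sigma>(i := fill m ?E \<tau>1 i)) = q (\<sigma>(i := fill m ?E \<tau>2 i))"
    using polys_update[OF q i_m \<sigma> _ _ eq] fill_in_cube[OF essential_subset] \<tau>1 \<tau>2 by blast
  then have "q (\<sigma>(i := \<tau>1 i)) = q (\<sigma>(i := \<tau>2 i))" using i by (simp add: fill_def)
  moreover have "\<tau>1 i \<in> {a, b}" "\<tau>2 i \<in> {a, b}" using \<tau>1 \<tau>2 i by auto
  ultimately show False using i(2) neq by auto
qed

abbreviation max_essential :: nat where
  "max_essential \<equiv> nat \<lfloor>log 2 (real (card (fst A)))\<rfloor>"

lemma card_essential_le:
  assumes q: "q \<in> polys m"
  shows "card (essential m q) \<le> max_essential"
proof -
  have "finite (essential m q)" using essential_subset finite_subset by blast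
  then have "2 ^ card (essential m q) = card (essential m q \<rightarrow>\<^sub>E {a, b})"
    using a_neq_b by (simp add: card_PiE numeral_2_eq_2)
  also have "\<dots> \<le> card (fst A)"
    by (rule card_inj_on_le[OF inj_on_fill_essential[OF q] _ fin])
       (use polys_closed[OF q] fill_in_cube[OF essential_subset] in blast)
  finally show ?thesis by (intro le_nat_floor le_log2_of_power)
qed

definition encode :: "nat \<Rightarrow> ((nat \<Rightarrow> 'a) \<Rightarrow> 'a) \<Rightarrow> nat set \<times> ((nat \<Rightarrow> 'a) \<Rightarrow> 'a)" where
  "encode m q = (essential m q, restrict (\<lambda>\<tau>. q (fill m (essential m q) \<tau>)) (essential m q \<rightarrow>\<^sub>E {a, b}))"

definition codes :: "nat \<Rightarrow> (nat set \<times> ((nat \<Rightarrow> 'a) \<Rightarrow> 'a)) set" where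
  "codes m = (SIGMA E:{E. E \<subseteq> {..<m} \<and> card E \<le> max_essential}. (E \<rightarrow>\<^sub>E {a, b}) \<rightarrow>\<^sub>E fst A)"

lemma encode_in_codes: "q \<in> polys m \<Longrightarrow> encode m q \<in> codes m"
  using essential_subset card_essential_le polys_closed fill_in_cube[OF essential_subset]
  by (fastforce simp: encode_def codes_def)

lemma inj_on_encode: "inj_on (encode m) (polys m)"
proof (rule inj_onI)
  fix q1 q2 assume q1: "q1 \<in> polys m" and q2: "q2 \<in> polys m" and eq: "encode m q1 = encode m q2"
  define E where "E = essential m q1"
  have E2: "essential m q2 = E" using eq by (simp add: encode_def E_def)
  have on_fill: "q1 (fill m E \<tau>) = q2 (fill m E \<tau>)" if "\<tau> \<in> E \<rightarrow>\<^sub>E {a, b}" for \<tau>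
    using fun_cong[OF eq[unfolded encode_def, THEN arg_cong[where f = snd]], of \<tau>] that
    by (simp add: E_def E2)
  show "q1 = q2"
  proof (rule extensionalityI[OF polys_extensional[OF q1] polys_extensional[OF q2]])
    fix \<sigma> assume \<sigma>: "\<sigma> \<in> cube m"
    let ?\<tau> = "restrict \<sigma> E"
    have \<tau>: "?\<tau> \<in> E \<rightarrow>\<^sub>E {a, b}" using \<sigma> essential_subset cube_apply by (fastforce simp: E_def)
    then have fill: "fill m E ?\<tau> \<in> cube m" using fill_in_cube essential_subset by (simp add: E_def)
    have agree: "\<forall>i\<in>E. \<sigma> i = fill m E ?\<tau> i" by (simp add: fill_def)
    have "q1 \<sigma> = q1 (fill m E ?\<tau>)" using eq_if_agree_on_essential[OF \<sigma> fill] agree by (simp add: E_def)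
    also have "\<dots> = q2 (fill m E ?\<tau>)" using on_fill[OF \<tau>] .
    also have "\<dots> = q2 \<sigma>" using eq_if_agree_on_essential[OF \<sigma> fill, of q2] agree by (simp add: E2)
    finally show "q1 \<sigma> = q2 \<sigma>" .
  qed
qed

lemma finite_codes: "finite (codes m)"
  unfolding codes_def using fin
  by (intro finite_SigmaI finite_PiE) (auto intro: finite_subset[of _ "Pow {..<m}"] dest: finite_subset)

lemma card_codes_le: "card (codes m) \<le> Suc m ^ max_essential * card (fst A) ^ 2 ^ max_essential"
proof -
  let ?S = "{E. E \<subseteq> {..<m} \<and> card E \<le> max_essential}"
  have "finite ?S" by (rule finite_subset[of _ "Pow {..<m}"]) auto
  then have "card (codes m) = (\<Sum>E\<in>?S. card ((E \<rightarrow>\<^sub>E {a, b}) \<rightarrow>\<^sub>E fst A))"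
    unfolding codes_def using fin by (intro card_SigmaI) (auto intro!: finite_PiE dest: finite_subset)
  also have "\<dots> \<le> (\<Sum>E\<in>?S. card (fst A) ^ 2 ^ max_essential)"
  proof (rule sum_mono)
    fix E assume E: "E \<in> ?S"
    then have "finite E" using finite_subset by blast
    then have "card ((E \<rightarrow>\<^sub>E {a, b}) \<rightarrow>\<^sub>E fst A) = card (fst A) ^ 2 ^ card E"
      using a_neq_b by (simp add: card_PiE finite_PiE numeral_2_eq_2)
    also have "\<dots> \<le> card (fst A) ^ 2 ^ max_essential"
      using E card_A_pos by (intro power_increasing) auto
    finally show "card ((E \<rightarrow>\<^sub>E {a, b}) \<rightarrow>\<^sub>E fst A) \<le> card (fst A) ^ 2 ^ max_essential" .
  qed
  also have "\<dots> \<le> Suc m ^ max_essential * card (fst A) ^ 2 ^ max_essential"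
    using card_subsets_le by simp
  finally show ?thesis .
qed

lemma finite_polys: "finite (polys m)"
  using inj_on_finite[OF inj_on_encode _ finite_codes] encode_in_codes by blast

lemma card_polys_le: "card (polys m) \<le> Suc m ^ max_essential * card (fst A) ^ 2 ^ max_essential"
  using card_inj_on_le[OF inj_on_encode _ finite_codes] encode_in_codes card_codes_le
  by (meson image_subsetI order_trans)

lemma cs_lower_bound:
  assumes "Suc m ^ max_essential * card (fst A) ^ 2 ^ max_essential \<le> n"
  shows "2 ^ m \<le> cs ar A n"
proof -
  have "2 ^ m \<le> card (surj_homs ar (poly_alg m) A)"
    using card_surj_homs_poly_alg[OF finite_polys] .
  also have "\<dots> \<le> cs ar A n"
    using order_trans[OF card_polys_le assms] finite_polys is_algebra_poly_alg
    by (intro card_surj_homs_le_cs[OF _ _ _ fin]) (auto simp: poly_alg_def)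
  finally show ?thesis .
qed

lemma max_essential_pos: "max_essential \<ge> 1"
proof -
  have "2 ^ 1 \<le> card (fst A)"
    using card_mono[OF fin, of "{a, b}"] a_in_A b_in_A a_neq_b by simp
  then show ?thesis by (intro le_nat_floor le_log2_of_power)
qed

end

theorem corollary3p5:
  fixes ar :: "'s \<Rightarrow> nat" and A :: "('a, 's) alg" and \<alpha> :: "('a \<times> 'a) set"
  assumes "is_algebra ar A" and "finite (fst A)"
    and "is_congruence ar A \<alpha>" and "strongly_abelian ar A \<alpha>" and "\<alpha> \<noteq> Id_on (fst A)"
  shows "\<exists>C > 0. \<forall>\<^sub>F n in sequentially.
           real (cs ar A n) \<ge> 2 powr (C * real n powr (1 / real (nat (floor (log 2 (real (card (fst A))))))))"
proof -
  have equiv: "equiv (fst A) \<alpha>" using assms(3) by (simp add: is_congruence_def)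
  then have "Id_on (fst A) \<subseteq> \<alpha>" unfolding equiv_def by (auto intro: refl_onD)
  then obtain a b where ab: "(a, b) \<in> \<alpha>" and "(a, b) \<notin> Id_on (fst A)"
    using assms(5) by auto
  moreover have "a \<in> fst A" using equiv_type[OF equiv] ab by auto
  ultimately have "a \<noteq> b" by auto
  obtain elems where "set elems = fst A" using finite_list[OF assms(2)] by blast
  interpret strongly_abelian_witness ar A \<alpha> a b elems
    by unfold_locales (use assms equiv ab \<open>a \<noteq> b\<close> \<open>set elems = fst A\<close> in auto)
  have D: "card (fst A) ^ 2 ^ max_essential \<ge> 1" using card_A_pos by simp
  show ?thesis by (rule eventually_exp_root_le[OF max_essential_pos D]) (rule cs_lower_bound)
qed

end
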